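(* Let $\mathbb K$ be an odometer-based system and $\nu$ a shift-invariant Borel probability measure on $\mathbb K$. Then $\nu(S)=1$.
   Context: An odometer-based construction sequence over a finite alphabet $\Sigma$ with coefficients $k_n\ge 2$: $\mathcal W_0=\Sigma$, $\mathcal W_{n+1}\subseteq(\mathcal W_n)^{k_n}$ (concatenations of $k_n$ words of $\mathcal W_n$), each $\mathcal W_n$ uniquely readable (whenever $u,v,w\in\mathcal W_n$ and $uv=pws$ then $p$ or $s$ is empty), and each word of $\mathcal W_n$ occurs in each word of $\mathcal W_{n+1}$. $\mathbb K$ is the set of $x\in\Sigma^{\mathbb Z}$ all of whose finite subwords occur in a word of some $\mathcal W_n$, with the shift $sh(x)(i)=x(i+1)$. $S\subseteq\mathbb K$ is the set of $x$ for which there are sequences $a_m,b_m\to\infty$ of natural numbers such that for every $m$ there is an $n$ with $x\restriction[-a_m,b_m)\in\mathcal W_n$. *)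

theory Defs
  imports "HOL-Probability.Probability"
begin

definition borel_of :: "'a topology \<Rightarrow> 'a measure" where
  "borel_of T = sigma (topspace T) {U. openin T U}"

definition restr :: "(int \<Rightarrow> 'a) \<Rightarrow> int \<Rightarrow> int \<Rightarrow> 'a list" where
  "restr x a b = map x [a..b-1]"

definition odometer_based :: "'a set \<Rightarrow> (nat \<Rightarrow> nat) \<Rightarrow> (nat \<Rightarrow> 'a list set) \<Rightarrow> bool" where
  "odometer_based \<Sigma> k W \<longleftrightarrow>
     finite \<Sigma> \<and> \<Sigma> \<noteq> {} \<and>
     (\<forall>n. k n \<ge> 2) \<and>
     W 0 = {[a] | a. a \<in> \<Sigma>} \<and>
     (\<forall>n. W (Suc n) \<subseteq> {concat ws | ws. length ws = k n \<and> set ws \<subseteq> W n}) \<and>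
     (\<forall>n. \<forall>u\<in>W n. \<forall>v\<in>W n. \<forall>w\<in>W n. \<forall>p s. u @ v = p @ w @ s \<longrightarrow> p = [] \<or> s = []) \<and>
     (\<forall>n. \<forall>w\<in>W n. \<forall>v\<in>W (Suc n). \<exists>p s. v = p @ w @ s)"

definition sysK :: "'a set \<Rightarrow> (nat \<Rightarrow> 'a list set) \<Rightarrow> (int \<Rightarrow> 'a) set" where
  "sysK \<Sigma> W = {x. (\<forall>i. x i \<in> \<Sigma>) \<and>
     (\<forall>a b. a \<le> b \<longrightarrow> (\<exists>n. \<exists>w\<in>W n. \<exists>p s. w = p @ restr x a b @ s))}"

definition sh :: "(int \<Rightarrow> 'a) \<Rightarrow> (int \<Rightarrow> 'a)" where
  "sh x = (\<lambda>i. x (i + 1))"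

definition setS :: "'a set \<Rightarrow> (nat \<Rightarrow> 'a list set) \<Rightarrow> (int \<Rightarrow> 'a) set" where
  "setS \<Sigma> W = {x \<in> sysK \<Sigma> W. \<exists>a b :: nat \<Rightarrow> nat.
      filterlim a at_top sequentially \<and> filterlim b at_top sequentially \<and>
      (\<forall>m. \<exists>n. restr x (- int (a m)) (int (b m)) \<in> W n)}"

definition topK :: "'a set \<Rightarrow> (nat \<Rightarrow> 'a list set) \<Rightarrow> (int \<Rightarrow> 'a) topology" where
  "topK \<Sigma> W = subtopology (product_topology (\<lambda>_. discrete_topology \<Sigma>) UNIV) (sysK \<Sigma> W)"

end

theory Submission
  imports Defs
begin

text \<open>
  Write \<open>L\<^sub>n = (\<Prod>i<n. k i)\<close> for the common length of the words in \<open>W\<^sub>n\<close>.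
  Every point of \<open>K\<close> is tiled by occurrences of \<open>W\<^sub>n\<close>-words, and unique readability
  forces any two occurrences to start at positions congruent modulo \<open>L\<^sub>n\<close>; hence exactly
  one occurrence starts in \<open>(-L\<^sub>n, 0]\<close>. The events ``an occurrence starts at \<open>s\<close>'' for
  \<open>s = 0, \<dots>, L\<^sub>n - 1\<close> are disjoint and, by shift invariance, equally likely, so each has
  probability at most \<open>1/L\<^sub>n\<close>. If \<open>x \<notin> S\<close>, there is an \<open>N\<close> such that no
  \<open>W\<^sub>n\<close>-word occupies \<open>[-a, b)\<close> with \<open>a, b \<ge> N\<close>, so for every \<open>n\<close> the occurrence
  starting in \<open>(-L\<^sub>n, 0]\<close> starts within \<open>N\<close> of one of the two ends. This has probability
  at most \<open>2N/L\<^sub>n \<longrightarrow> 0\<close>.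
\<close>

lemma restr_conv_map: "restr x a b = map (\<lambda>i. x (a + int i)) [0..<nat (b - a)]"
proof -
  have "[a..b - 1] = map (\<lambda>i. a + int i) [0..<nat (b - a)]"
  proof (induction "nat (b - a)" arbitrary: a)
    case 0
    then show ?case by simp
  next
    case (Suc m)
    then have "[a..b - 1] = a # [a + 1..b - 1]" by (simp add: upto_rec1)
    moreover have "[0..<nat (b - a)] = 0 # map Suc [0..<m]"
      using Suc(2) by (simp add: map_Suc_upt upt_conv_Cons del: upt_Suc)
    moreover have "m = nat (b - (a + 1))" using Suc(2) by linarith
    ultimately show ?case using Suc(1)[of "a + 1"] by (simp add: o_def add_ac)
  qed
  then show ?thesis by (simp add: restr_def)
qed

lemma length_restr [simp]: "length (restr x a b) = nat (b - a)"
  by (simp add: restr_conv_map)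

lemma restr_eq_Nil_iff: "restr x a b = [] \<longleftrightarrow> b \<le> a"
  by (simp add: restr_conv_map)

lemma restr_Cons: "a < b \<Longrightarrow> restr x a b = x a # restr x (a + 1) b"
  by (simp add: restr_def upto_rec1)

lemma restr_eq_Cons_iff: "restr x a b = c # w \<longleftrightarrow> a < b \<and> x a = c \<and> restr x (a + 1) b = w"
  using restr_eq_Nil_iff[of x a b] by (cases "a < b") (auto simp: restr_Cons)

lemma take_drop_restr:
  assumes "a + int d + int l \<le> b"
  shows "take l (drop d (restr x a b)) = restr x (a + int d) (a + int d + int l)"
proof -
  have "[d..<d + l] = map (\<lambda>i. i + d) [0..<l]" by (simp add: map_add_upt add.commute)
  moreover have "d + l \<le> nat (b - a)" using assms by linarith
  ultimately show ?thesis by (simp add: restr_conv_map drop_map take_map add_ac)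
qed

lemma restr_sh: "restr (sh x) a b = restr x (a + 1) (b + 1)"
  by (simp add: restr_conv_map sh_def add_ac)

section \<open>Uniquely readable codes of uniform length\<close>

definition uniquely_readable :: "'a list set \<Rightarrow> bool" where
  "uniquely_readable C \<longleftrightarrow> (\<forall>u\<in>C. \<forall>v\<in>C. \<forall>w\<in>C. \<forall>p s. u @ v = p @ w @ s \<longrightarrow> p = [] \<or> s = [])"

lemma concat_occurrence_aligned:
  assumes ur: "uniquely_readable C" and len: "\<And>u. u \<in> C \<Longrightarrow> length u = L"
    and "set ws \<subseteq> C" "w \<in> C" "concat ws = p @ w @ s"
  shows "L dvd length p"
  using assms(3-)
proof (induction ws arbitrary: p)
  case Nil
  then show ?case by simp
next
  case (Cons u ws)
  have lu: "length u = L" and lw: "length w = L" using Cons.prems len by auto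
  have eq: "u @ concat ws = p @ w @ s" using Cons.prems(3) by simp
  consider "L \<le> length p" | "length p = 0" | "0 < length p" "length p < L" by linarith
  then show ?case
  proof cases
    case 1
    have "concat ws = drop L p @ w @ s"
      using arg_cong[OF eq, of "drop L"] lu 1 by simp
    then have "L dvd length (drop L p)" using Cons by auto
    then have "L dvd (length p - L) + L" by simp
    then show ?thesis using 1 by simp
  next
    case 2
    then show ?thesis by simp
  next
    case 3
    show ?thesis
    proof (cases ws)
      case Nil
      then show ?thesis using arg_cong[OF eq, of length] lu lw 3 by simp
    next
      case (Cons v ws')
      have v: "v \<in> C" "length v = L" using Cons.prems(1) \<open>ws = v # ws'\<close> len by auto
      have "take (2 * L) (u @ concat ws) = u @ v"
        using lu v \<open>ws = v # ws'\<close> by simp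
      moreover have "take (2 * L) (p @ w @ s) = p @ w @ take (2 * L - length p - L) s"
        using 3 lw by (simp add: take_append)
      ultimately have "u @ v = p @ w @ take (2 * L - length p - L) s" using eq by simp
      then have "p = [] \<or> take (2 * L - length p - L) s = []"
        using ur Cons.prems(1,2) v(1) unfolding uniquely_readable_def by (meson list.set_intros(1) subsetD)
      then have "s = []" using 3 by auto
      then show ?thesis using arg_cong[OF eq, of length] lu v 3 lw \<open>ws = v # ws'\<close> by simp
    qed
  qed
qed

lemma concat_window_contains_word:
  assumes len: "\<And>u. u \<in> C \<Longrightarrow> length u = L" and "0 < L"
    and "set ws \<subseteq> C" "concat ws = p @ r @ q" "2 * L - 1 \<le> length r"
  shows "\<exists>d<L. d + L \<le> length r \<and> take L (drop d r) \<in> C"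
  using assms(3-)
proof (induction ws arbitrary: p)
  case Nil
  then show ?case using \<open>0 < L\<close> by auto
next
  case (Cons u ws)
  have lu: "length u = L" using Cons.prems len by auto
  have eq: "u @ concat ws = p @ r @ q" using Cons.prems(2) by simp
  consider "L \<le> length p" | "length p = 0" | "0 < length p" "length p < L" by linarith
  then show ?case
  proof cases
    case 1
    have "concat ws = drop L p @ r @ q"
      using arg_cong[OF eq, of "drop L"] lu 1 by simp
    then show ?thesis using Cons by auto
  next
    case 2
    then have "take L r = u" using arg_cong[OF eq, of "take L"] lu Cons.prems(3) by simp
    then show ?thesis using \<open>0 < L\<close> Cons.prems by (intro exI[of _ 0]) auto
  next
    case 3
    define d where "d = L - length p"
    have d: "d < L" "L \<le> length (drop d r)"
      using 3 Cons.prems(3) unfolding d_def by (simp_all only: length_drop)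
    have cw: "concat ws = drop d r @ q"
      using arg_cong[OF eq, of "drop L"] lu 3 Cons.prems(3) unfolding d_def by (simp add: drop_append)
    then obtain v ws' where "ws = v # ws'" using d by (cases ws) auto
    then have "v \<in> C" "length v = L" using Cons.prems(1) len by auto
    moreover have "take L (drop d r) = v"
      using arg_cong[OF cw, of "take L"] d \<open>ws = v # ws'\<close> \<open>length v = L\<close> by simp
    ultimately show ?thesis using d by (intro exI[of _ d]) auto
  qed
qed

lemma concat_in_concat_lists:
  "set ws \<subseteq> concat ` lists C \<Longrightarrow> concat ws \<in> concat ` lists C"
proof (induction ws)
  case Nil
  then show ?case by (auto intro: image_eqI[of _ _ "[]"])
next
  case (Cons u ws)
  then obtain us vs where "u = concat us" "us \<in> lists C" "concat ws = concat vs" "vs \<in> lists C"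
    by auto
  then show ?case by (intro rev_image_eqI[of "us @ vs"]) simp_all
qed

section \<open>Odometer-based construction sequences\<close>

locale odometer =
  fixes \<Sigma> :: "'a set" and k :: "nat \<Rightarrow> nat" and W :: "nat \<Rightarrow> 'a list set"
  assumes odometer_based: "odometer_based \<Sigma> k W"
begin

definition block_length :: "nat \<Rightarrow> nat" where
  "block_length n = (\<Prod>i<n. k i)"

lemma block_length_0 [simp]: "block_length 0 = 1"
  by (simp add: block_length_def)

lemma block_length_Suc [simp]: "block_length (Suc n) = k n * block_length n"
  by (simp add: block_length_def mult.commute)

lemma k_ge_2: "2 \<le> k n"
  using odometer_based unfolding odometer_based_def by auto

lemma W_0: "W 0 = {[c] | c. c \<in> \<Sigma>}"
  using odometer_based unfolding odometer_based_def by auto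

lemma W_Suc: "w \<in> W (Suc n) \<Longrightarrow> \<exists>ws. w = concat ws \<and> length ws = k n \<and> set ws \<subseteq> W n"
  using odometer_based unfolding odometer_based_def by blast

lemma uniquely_readable_W: "uniquely_readable (W n)"
  using odometer_based unfolding odometer_based_def uniquely_readable_def by blast

lemma W_occurs_in_W_Suc: "w \<in> W n \<Longrightarrow> v \<in> W (Suc n) \<Longrightarrow> \<exists>p s. v = p @ w @ s"
  using odometer_based unfolding odometer_based_def by blast

lemma block_length_pos: "0 < block_length n"
proof -
  have "0 < k i" for i using k_ge_2[of i] by linarith
  then show ?thesis by (simp add: block_length_def prod_pos)
qed

lemma block_length_Suc_ge: "2 * block_length n \<le> block_length (Suc n)"
  using mult_right_mono[OF k_ge_2[of n], of "block_length n"] by simp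

lemma block_length_gt: "n < block_length n"
proof (induction n)
  case (Suc n)
  then show ?case using block_length_Suc_ge[of n] by linarith
qed simp

lemma block_length_strict_mono: "strict_mono block_length"
proof (rule strict_monoI_Suc)
  show "block_length n < block_length (Suc n)" for n
    using block_length_pos[of n] block_length_Suc_ge[of n] by linarith
qed

lemma length_W: "w \<in> W n \<Longrightarrow> length w = block_length n"
proof (induction n arbitrary: w)
  case 0
  then show ?case using W_0 by auto
next
  case (Suc n)
  then obtain ws where ws: "w = concat ws" "length ws = k n" "set ws \<subseteq> W n"
    using W_Suc by blast
  have "length w = sum_list (map length ws)" using ws(1) by (simp add: length_concat)
  also have "map length ws = map (\<lambda>_. block_length n) ws"
    using Suc.IH ws(3) by (intro map_cong) auto
  also have "sum_list (map (\<lambda>_. block_length n) ws) = k n * block_length n"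
    using ws(2) by (simp add: sum_list_triv)
  finally show ?case by simp
qed

lemma W_subset_concat_W: "n \<le> m \<Longrightarrow> W m \<subseteq> concat ` lists (W n)"
proof (induction m rule: dec_induct)
  case base
  show ?case by (auto intro: image_eqI[of _ _ "[_]"])
next
  case (step m)
  show ?case
  proof
    fix w assume "w \<in> W (Suc m)"
    then obtain ws where "w = concat ws" "set ws \<subseteq> W m" using W_Suc by blast
    then show "w \<in> concat ` lists (W n)" using step.IH concat_in_concat_lists by blast
  qed
qed

lemma W_occurs_in_W: "m < n \<Longrightarrow> w \<in> W m \<Longrightarrow> v \<in> W n \<Longrightarrow> \<exists>p s. v = p @ w @ s"
proof (induction n arbitrary: v)
  case 0
  then show ?case by simp
next
  case (Suc n)
  obtain ws where ws: "v = concat ws" "length ws = k n" "set ws \<subseteq> W n"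
    using W_Suc Suc.prems by blast
  show ?case
  proof (cases "m = n")
    case True
    then show ?thesis using Suc.prems W_occurs_in_W_Suc by blast
  next
    case False
    obtain u where "u \<in> set ws" using k_ge_2[of n] ws(2) by (cases ws) auto
    then obtain ws1 ws2 where "v = concat ws1 @ u @ concat ws2" using ws(1) by (auto dest: split_list)
    moreover obtain p s where "u = p @ w @ s"
      using False Suc \<open>u \<in> set ws\<close> ws(3) by (meson less_SucE subsetD)
    ultimately show ?thesis by (intro exI[of _ "concat ws1 @ p"] exI[of _ "s @ concat ws2"]) simp
  qed
qed

lemma W_nonempty:
  assumes "x \<in> sysK \<Sigma> W"
  shows "W n \<noteq> {}"
proof -
  have "\<forall>a b. a \<le> b \<longrightarrow> (\<exists>m. \<exists>w\<in>W m. \<exists>p s. w = p @ restr x a b @ s)"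
    using assms unfolding sysK_def by blast
  then obtain m w p s where w: "w \<in> W m" "w = p @ restr x 0 (int (block_length n)) @ s"
    by (meson of_nat_0_le_iff)
  then have "block_length n \<le> block_length m" using length_W[OF w(1)] by simp
  then have "n \<le> m" using block_length_strict_mono by (simp add: strict_mono_less_eq)
  then have "w \<in> concat ` lists (W n)" using W_subset_concat_W w(1) by blast
  then obtain us where "w = concat us" "us \<in> lists (W n)" by blast
  moreover have "w \<noteq> []" using length_W[OF w(1)] block_length_pos[of m] by auto
  ultimately show ?thesis by auto
qed

lemma restr_in_concat_W:
  assumes "x \<in> sysK \<Sigma> W" "a \<le> b"
  obtains ws p s where "set ws \<subseteq> W n" "concat ws = p @ restr x a b @ s"
proof -
  obtain m w p s where w: "w \<in> W m" "w = p @ restr x a b @ s"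
    using assms unfolding sysK_def by force
  define M where "M = Suc (max m n)"
  obtain v where v: "v \<in> W M" using W_nonempty[OF assms(1)] by blast
  have "m < M" "n \<le> M" by (simp_all add: M_def)
  obtain p' s' where v_w: "v = p' @ w @ s'" using W_occurs_in_W[OF \<open>m < M\<close> w(1) v] by blast
  have "v \<in> concat ` lists (W n)" using W_subset_concat_W[OF \<open>n \<le> M\<close>] v by blast
  then obtain ws where "v = concat ws" "ws \<in> lists (W n)" by blast
  then show ?thesis using that v_w w(2) by (metis append.assoc in_lists_conv_set subsetI)
qed

lemma block_start_exists:
  assumes "x \<in> sysK \<Sigma> W"
  obtains s where "- int (block_length n) < s" "s \<le> 0" "restr x s (s + int (block_length n)) \<in> W n"
proof -
  define L where "L = block_length n"
  define a where "a = 1 - int L"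
  have L: "0 < L" unfolding L_def by (rule block_length_pos)
  have "a \<le> int L" using L unfolding a_def by simp
  then obtain ws p q where ws: "set ws \<subseteq> W n" "concat ws = p @ restr x a (int L) @ q"
    by (rule restr_in_concat_W[OF assms])
  have "length (restr x a (int L)) = 2 * L - 1" using L unfolding a_def by simp
  then obtain d where d: "d < L" "take L (drop d (restr x a (int L))) \<in> W n"
    using concat_window_contains_word[OF _ L ws] length_W unfolding L_def by auto
  moreover have "take L (drop d (restr x a (int L))) = restr x (a + int d) (a + int d + int L)"
    using d(1) unfolding a_def by (intro take_drop_restr) simp
  ultimately show ?thesis using that[of "a + int d"] unfolding a_def L_def by simp
qed

lemma block_starts_congruent:
  assumes "x \<in> sysK \<Sigma> W" "i \<le> j"
    and "restr x i (i + int (block_length n)) \<in> W n" "restr x j (j + int (block_length n)) \<in> W n"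
  shows "int (block_length n) dvd j - i"
proof -
  define L where "L = block_length n"
  define d where "d = nat (j - i)"
  define r where "r = restr x i (j + int L)"
  have j: "j = i + int d" using assms(2) unfolding d_def by simp
  have "i \<le> j + int L" using assms(2) by simp
  then obtain ws p q where ws: "set ws \<subseteq> W n" "concat ws = p @ r @ q"
    unfolding r_def by (rule restr_in_concat_W[OF assms(1)])
  have "take L r = restr x i (i + int L)"
    using take_drop_restr[of i 0 L "j + int L" x] j unfolding r_def by simp
  then have "concat ws = p @ restr x i (i + int L) @ (drop L r @ q)"
    using ws(2) by (metis append.assoc append_take_drop_id)
  then have "L dvd length p"
    using concat_occurrence_aligned[OF uniquely_readable_W _ ws(1)] length_W assms(3)
    unfolding L_def by blast
  have "take L (drop d r) = restr x j (j + int L)"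
    using take_drop_restr[of i d L "j + int L" x] j unfolding r_def by simp
  then have "concat ws = (p @ take d r) @ restr x j (j + int L) @ (drop L (drop d r) @ q)"
    using ws(2) by (metis append.assoc append_take_drop_id)
  then have "L dvd length (p @ take d r)"
    using concat_occurrence_aligned[OF uniquely_readable_W _ ws(1)] length_W assms(4)
    unfolding L_def by blast
  moreover have "length (p @ take d r) = length p + d" using j unfolding r_def by simp
  ultimately have "L dvd d" using \<open>L dvd length p\<close> by (simp add: dvd_add_right_iff)
  then show ?thesis using j unfolding L_def by simp
qed

end

lemma topspace_topK: "topspace (topK \<Sigma> W) = sysK \<Sigma> W"
  unfolding topK_def sysK_def by (auto simp: PiE_def extensional_def)

lemma openin_topK_coordinate: "openin (topK \<Sigma> W) {x \<in> sysK \<Sigma> W. x i = c}"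
proof -
  have "continuous_map (topK \<Sigma> W) (discrete_topology \<Sigma>) (\<lambda>x. x i)"
    unfolding topK_def
    by (intro continuous_map_from_subtopology continuous_map_product_projection) simp
  then have "openin (topK \<Sigma> W) {x \<in> topspace (topK \<Sigma> W). x i \<in> {c} \<inter> \<Sigma>}"
    by (rule openin_continuous_map_preimage) simp
  moreover have "{x \<in> topspace (topK \<Sigma> W). x i \<in> {c} \<inter> \<Sigma>} = {x \<in> sysK \<Sigma> W. x i = c}"
    unfolding topspace_topK by (auto simp: sysK_def)
  ultimately show ?thesis by simp
qed

lemma openin_topK_restr_eq: "openin (topK \<Sigma> W) {x \<in> sysK \<Sigma> W. restr x a b = w}"
proof (induction w arbitrary: a)
  case Nil
  have "{x \<in> sysK \<Sigma> W. restr x a b = []} = (if b \<le> a then topspace (topK \<Sigma> W) else {})"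
    by (auto simp: restr_eq_Nil_iff topspace_topK)
  then show ?case by simp
next
  case (Cons c w)
  have "{x \<in> sysK \<Sigma> W. restr x a b = c # w} =
    (if a < b then {x \<in> sysK \<Sigma> W. x a = c} \<inter> {x \<in> sysK \<Sigma> W. restr x (a + 1) b = w} else {})"
    by (auto simp: restr_eq_Cons_iff)
  then show ?case using openin_Int[OF openin_topK_coordinate Cons.IH] by simp
qed

lemma openin_topK_restr_in: "openin (topK \<Sigma> W) {x \<in> sysK \<Sigma> W. restr x a b \<in> A}"
proof -
  have "{x \<in> sysK \<Sigma> W. restr x a b \<in> A} = (\<Union>w\<in>A. {x \<in> sysK \<Sigma> W. restr x a b = w})"
    by auto
  then show ?thesis by (auto intro!: openin_Union openin_topK_restr_eq)
qed

lemma openin_in_sets_borel_of: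
  assumes "openin T U"
  shows "U \<in> sets (borel_of T)"
proof -
  have "{U. openin T U} \<subseteq> Pow (topspace T)" by (auto dest: openin_subset)
  then show ?thesis using assms unfolding borel_of_def by (simp add: sigma_sets.Basic)
qed

lemma setS_iff: "x \<in> setS \<Sigma> W \<longleftrightarrow>
   x \<in> sysK \<Sigma> W \<and> (\<forall>N. \<exists>a\<ge>N. \<exists>b\<ge>N. \<exists>n. restr x (- int a) (int b) \<in> W n)"
  (is "_ \<longleftrightarrow> _ \<and> ?unbounded")
proof
  assume "x \<in> setS \<Sigma> W"
  then obtain a b :: "nat \<Rightarrow> nat" where x: "x \<in> sysK \<Sigma> W" and
    ab: "filterlim a at_top sequentially" "filterlim b at_top sequentially" and
    W: "\<forall>m. \<exists>n. restr x (- int (a m)) (int (b m)) \<in> W n"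
    unfolding setS_def by blast
  have "\<exists>a'\<ge>N. \<exists>b'\<ge>N. \<exists>n. restr x (- int a') (int b') \<in> W n" for N
  proof -
    have "eventually (\<lambda>m. N \<le> a m \<and> N \<le> b m) sequentially"
      using ab unfolding filterlim_at_top by (intro eventually_conj) blast+
    then obtain m where "N \<le> a m" "N \<le> b m" unfolding eventually_sequentially by blast
    then show ?thesis using W by blast
  qed
  then show "x \<in> sysK \<Sigma> W \<and> ?unbounded" using x by blast
next
  assume r: "x \<in> sysK \<Sigma> W \<and> ?unbounded"
  then obtain a b :: "nat \<Rightarrow> nat" where
    ab: "\<And>N. N \<le> a N" "\<And>N. N \<le> b N" "\<And>N. \<exists>n. restr x (- int (a N)) (int (b N)) \<in> W n"
    by metis
  have "filterlim a at_top sequentially" "filterlim b at_top sequentially"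
    using ab(1,2) by (auto intro: filterlim_at_top_mono[OF filterlim_ident])
  then show "x \<in> setS \<Sigma> W" unfolding setS_def using r ab(3) by blast
qed

text \<open>Starts \<open>s \<in> (-L, 0]\<close> of windows \<open>[s, s + L)\<close> that do not contain \<open>[-N, N)\<close>.\<close>

definition boundary_starts :: "nat \<Rightarrow> nat \<Rightarrow> int set" where
  "boundary_starts N L = {s. - int L < s \<and> s \<le> 0 \<and> (- int N < s \<or> s + int L < int N)}"

lemma finite_boundary_starts: "finite (boundary_starts N L)"
  by (rule finite_subset[of _ "{- int L<..0}"]) (auto simp: boundary_starts_def)

lemma card_boundary_starts: "card (boundary_starts N L) \<le> 2 * N"
proof -
  have "boundary_starts N L \<subseteq> {- int N<..0} \<union> {- int L<..<int N - int L}"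
    unfolding boundary_starts_def by auto
  then have "card (boundary_starts N L) \<le> card ({- int N<..0} \<union> {- int L<..<int N - int L})"
    by (intro card_mono) auto
  also have "\<dots> \<le> card {- int N<..0} + card {- int L<..<int N - int L}"
    by (rule card_Un_le)
  also have "\<dots> \<le> 2 * N" by simp
  finally show ?thesis .
qed

section \<open>Shift-invariant probability measures\<close>

locale shift_invariant_odometer_measure = odometer \<Sigma> k W for \<Sigma> :: "'a set" and k W +
  fixes \<nu> :: "(int \<Rightarrow> 'a) measure"
  assumes sets_\<nu>: "sets \<nu> = sets (borel_of (topK \<Sigma> W))"
    and space_\<nu>: "space \<nu> = sysK \<Sigma> W"
    and prob_\<nu>: "prob_space \<nu>"
    and sh_measurable: "sh \<in> measurable \<nu> \<nu>"
    and sh_invariant: "\<And>A. A \<in> sets \<nu> \<Longrightarrow> emeasure \<nu> (sh -` A \<inter> space \<nu>) = emeasure \<nu> A"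
begin

interpretation prob_space \<nu> by (rule prob_\<nu>)

lemma restr_in_sets: "{x \<in> space \<nu>. restr x a b \<in> A} \<in> sets \<nu>"
  unfolding sets_\<nu> space_\<nu> by (intro openin_in_sets_borel_of openin_topK_restr_in)

lemma setS_in_sets: "setS \<Sigma> W \<in> sets \<nu>"
proof -
  have "setS \<Sigma> W = {x \<in> space \<nu>. \<forall>N::nat. \<exists>a::nat. N \<le> a \<and> (\<exists>b::nat. N \<le> b \<and>
      (\<exists>n::nat. restr x (- int a) (int b) \<in> W n))}"
    by (auto simp: setS_iff space_\<nu>)
  also have "\<dots> \<in> sets \<nu>"
    by (intro sets.sets_Collect_countable_All sets.sets_Collect_countable_Ex sets.sets_Collect_conj
        sets.sets_Collect_const restr_in_sets)
  finally show ?thesis .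
qed

definition block_at :: "nat \<Rightarrow> int \<Rightarrow> (int \<Rightarrow> 'a) set" where
  "block_at n s = {x \<in> space \<nu>. restr x s (s + int (block_length n)) \<in> W n}"

lemma block_at_in_sets: "block_at n s \<in> sets \<nu>"
  unfolding block_at_def by (rule restr_in_sets)

lemma measure_block_at_shift: "measure \<nu> (block_at n (s + 1)) = measure \<nu> (block_at n s)"
proof -
  have "sh -` block_at n s \<inter> space \<nu> = block_at n (s + 1)"
    using measurable_space[OF sh_measurable] by (auto simp: block_at_def restr_sh add_ac)
  then have "emeasure \<nu> (block_at n (s + 1)) = emeasure \<nu> (block_at n s)"
    using sh_invariant[OF block_at_in_sets] by metis
  then show ?thesis by (simp add: emeasure_eq_measure)
qed

lemma measure_block_at: "measure \<nu> (block_at n s) = measure \<nu> (block_at n 0)"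
proof (induction s rule: int_induct[of _ 0])
  case (step1 i)
  then show ?case using measure_block_at_shift by simp
next
  case (step2 i)
  then show ?case using measure_block_at_shift[of n "i - 1"] by simp
qed simp

lemma block_at_disjoint:
  assumes "i < j" "j - i < int (block_length n)"
  shows "block_at n i \<inter> block_at n j = {}"
proof (rule ccontr)
  assume "block_at n i \<inter> block_at n j \<noteq> {}"
  then obtain x where "x \<in> sysK \<Sigma> W" "restr x i (i + int (block_length n)) \<in> W n"
      "restr x j (j + int (block_length n)) \<in> W n"
    by (auto simp: block_at_def space_\<nu>)
  then have "int (block_length n) dvd j - i" using block_starts_congruent assms(1) by simp
  then show False using assms by (auto dest: zdvd_imp_le)
qed

lemma measure_block_at_le: "measure \<nu> (block_at n s) \<le> 1 / real (block_length n)"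
proof -
  let ?L = "block_length n"
  have "block_at n (int i) \<inter> block_at n (int j) = {}" if "i < j" "j < ?L" for i j
    using block_at_disjoint[of "int i" "int j" n] that by simp
  then have "disjoint_family_on (\<lambda>i. block_at n (int i)) {..<?L}"
    unfolding disjoint_family_on_def by (metis Int_commute lessThan_iff nat_neq_iff)
  then have "measure \<nu> (\<Union>i<?L. block_at n (int i)) = (\<Sum>i<?L. measure \<nu> (block_at n (int i)))"
    by (intro finite_measure_finite_Union) (auto simp: block_at_in_sets)
  also have "\<dots> = real ?L * measure \<nu> (block_at n s)"
    by (simp add: measure_block_at[of n "int _"] measure_block_at[of n s])
  finally have "real ?L * measure \<nu> (block_at n s) \<le> 1" using prob_le_1 by metis
  then show ?thesis using block_length_pos[of n] by (simp add: field_simps)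
qed

abbreviation boundary_blocks :: "nat \<Rightarrow> nat \<Rightarrow> (int \<Rightarrow> 'a) set" where
  "boundary_blocks N n \<equiv> \<Union>s\<in>boundary_starts N (block_length n). block_at n s"

lemma measure_boundary_blocks_le:
  "measure \<nu> (boundary_blocks N n) \<le> 2 * real N / real (block_length n)"
proof -
  have "measure \<nu> (boundary_blocks N n) \<le> (\<Sum>s\<in>boundary_starts N (block_length n). measure \<nu> (block_at n s))"
    by (intro measure_UNION_le finite_boundary_starts block_at_in_sets)
  also have "\<dots> \<le> real (card (boundary_starts N (block_length n))) * (1 / real (block_length n))"
    using sum_bounded_above[OF measure_block_at_le] by simp
  also have "\<dots> \<le> real (2 * N) * (1 / real (block_length n))"
    by (intro mult_right_mono of_nat_mono card_boundary_starts) simp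
  finally show ?thesis by simp
qed

lemma boundary_blocks_null: "(\<Inter>n. boundary_blocks N n) \<in> null_sets \<nu>"
proof -
  have "measure \<nu> (\<Inter>n. boundary_blocks N n) \<le> 2 * real N / real (Suc n)" for n
  proof -
    have "measure \<nu> (\<Inter>n. boundary_blocks N n) \<le> measure \<nu> (boundary_blocks N n)"
      by (intro finite_measure_mono) (auto intro!: sets.finite_UN finite_boundary_starts block_at_in_sets)
    also have "\<dots> \<le> 2 * real N / real (block_length n)" by (rule measure_boundary_blocks_le)
    also have "\<dots> \<le> 2 * real N / real (Suc n)"
      using block_length_gt[of n] by (intro divide_left_mono) auto
    finally show ?thesis .
  qed
  moreover have "(\<lambda>n. 2 * real N / real (Suc n)) \<longlonglongrightarrow> 0"
    using LIMSEQ_Suc[OF lim_const_over_n] by simp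
  ultimately have "measure \<nu> (\<Inter>n. boundary_blocks N n) \<le> 0"
    by (intro LIMSEQ_le_const[where a = "measure \<nu> _"]) auto
  then have "measure \<nu> (\<Inter>n. boundary_blocks N n) = 0" using measure_nonneg by (rule antisym)
  moreover have "(\<Inter>n. boundary_blocks N n) \<in> sets \<nu>"
    by (auto intro!: sets.finite_UN finite_boundary_starts block_at_in_sets)
  ultimately show ?thesis by (auto simp: emeasure_eq_measure intro!: null_setsI)
qed

lemma compl_setS_subset_boundary_blocks: "space \<nu> - setS \<Sigma> W \<subseteq> (\<Union>N. \<Inter>n. boundary_blocks N n)"
proof
  fix x assume x: "x \<in> space \<nu> - setS \<Sigma> W"
  then have "x \<in> sysK \<Sigma> W" by (simp add: space_\<nu>)
  with x obtain N where N: "\<And>a b n. N \<le> a \<Longrightarrow> N \<le> b \<Longrightarrow> restr x (- int a) (int b) \<notin> W n"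
    by (auto simp: setS_iff)
  have "x \<in> boundary_blocks N n" for n
  proof -
    obtain s where s: "- int (block_length n) < s" "s \<le> 0"
      "restr x s (s + int (block_length n)) \<in> W n"
      using block_start_exists[OF \<open>x \<in> sysK \<Sigma> W\<close>] by blast
    have "s \<in> boundary_starts N (block_length n)"
    proof (rule ccontr)
      assume "s \<notin> boundary_starts N (block_length n)"
      then have "N \<le> nat (- s)" "N \<le> nat (s + int (block_length n))"
        using s(1,2) unfolding boundary_starts_def by auto
      then show False using N s by fastforce
    qed
    moreover have "x \<in> block_at n s" using x s unfolding block_at_def by simp
    ultimately show ?thesis by blast
  qed
  then show "x \<in> (\<Union>N. \<Inter>n. boundary_blocks N n)" by blast
qed

lemma emeasure_setS: "emeasure \<nu> (setS \<Sigma> W) = 1"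
proof -
  have "space \<nu> - setS \<Sigma> W \<in> null_sets \<nu>"
    by (rule null_sets_subset[OF null_sets_UN[OF boundary_blocks_null]])
      (use compl_setS_subset_boundary_blocks setS_in_sets in auto)
  then have "prob (space \<nu> - setS \<Sigma> W) = 0" by (rule measure_eq_0_null_sets)
  then show ?thesis using prob_compl[OF setS_in_sets] by (simp add: emeasure_eq_measure)
qed

end

theorem mainTheorem14:
  fixes \<Sigma> :: "'a set" and k :: "nat \<Rightarrow> nat" and W :: "nat \<Rightarrow> 'a list set"
    and \<nu> :: "(int \<Rightarrow> 'a) measure"
  assumes "odometer_based \<Sigma> k W"
    and "sets \<nu> = sets (borel_of (topK \<Sigma> W))"
    and "space \<nu> = sysK \<Sigma> W"
    and "prob_space \<nu>"
    and "sh \<in> measurable \<nu> \<nu>"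
    and "\<And>A. A \<in> sets \<nu> \<Longrightarrow> emeasure \<nu> (sh -` A \<inter> space \<nu>) = emeasure \<nu> A"
  shows "emeasure \<nu> (setS \<Sigma> W) = 1"
proof -
  interpret shift_invariant_odometer_measure \<Sigma> k W \<nu>
    using assms by (intro shift_invariant_odometer_measure.intro odometer.intro
        shift_invariant_odometer_measure_axioms.intro)
  show ?thesis by (rule emeasure_setS)
qed

end
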